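(* Let $V=\mathbb R^{2n}$ with basis $e_1,\dots,e_n,e_1',\dots,e_n'$ and scalar product $\langle\cdot,\cdot\rangle$ of signature $(n,n)$ given by $\langle e_i,e_j\rangle=\delta_{ij}$, $\langle e_i',e_j'\rangle=-\delta_{ij}$, $\langle e_i,e_j'\rangle=0$. Let $\Delta_{\mathfrak{so}(n)}\subset\mathfrak{so}(V)$ be the diagonal subalgebra consisting of the endomorphisms $A$ with $Ae_j=\sum_k a_{kj}e_k$ and $Ae_j'=\sum_ka_{kj}e_k'$ for some skew-symmetric real $n\times n$ matrix $(a_{kj})$. Then its generalized first prolongation vanishes: $\Delta_{\mathfrak{so}(n)}^{\langle1\rangle}=0$.
   Context: For a Lie subalgebra $\mathfrak h\subset\mathfrak{so}(V)$, an element $\eta\in V^*\otimes\mathfrak h$ assigns to $u\in V$ an endomorphism $\eta_u\in\mathfrak h$, and we write $\eta(u,v,w)=\langle\eta_uv,w\rangle$ (skew in $v,w$). The generalized first prolongation is $\mathfrak h^{\langle1\rangle}=\{\eta\in V^*\otimes\mathfrak h:\ \eta(u,v,w)+\eta(w,u,v)+\eta(v,w,u)=0\ \text{for all }u,v,w\in V\}$. *)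

theory Defs
  imports "HOL-Analysis.Analysis"
begin

text \<open>V = R^{2n} is modelled as real^'n \<times> real^'n: the pair (x,y) stands for
  sum_i x_i e_i + sum_i y_i e_i'.\<close>

definition scal_nn :: "((real^'n) \<times> (real^'n)) \<Rightarrow> ((real^'n) \<times> (real^'n)) \<Rightarrow> real" where
  "scal_nn p q = fst p \<bullet> fst q - snd p \<bullet> snd q"

definition diag_so :: "(((real^'n) \<times> (real^'n)) \<Rightarrow> ((real^'n) \<times> (real^'n))) set" where
  "diag_so = {A. \<exists>a::real^'n^'n. transpose a = - a \<and>
                 A = (\<lambda>p. (a *v fst p, a *v snd p))}"

definition gen_prolong1 ::
  "('v::real_vector \<Rightarrow> 'v \<Rightarrow> real) \<Rightarrow> ('v \<Rightarrow> 'v) set \<Rightarrow> ('v \<Rightarrow> 'v \<Rightarrow> 'v) set" where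
  "gen_prolong1 B h = {\<eta>.
     (\<forall>u u' v. \<eta> (u + u') v = \<eta> u v + \<eta> u' v) \<and>
     (\<forall>c u v. \<eta> (c *\<^sub>R u) v = c *\<^sub>R \<eta> u v) \<and>
     (\<forall>u. \<eta> u \<in> h) \<and>
     (\<forall>u v w. B (\<eta> u v) w + B (\<eta> w u) v + B (\<eta> v w) u = 0)}"

end

theory Submission
  imports Defs
begin

text \<open>Every element of the diagonal subalgebra preserves the two summands of V, which are
  orthogonal; so in the cyclic sum with u in one summand and v, w in the other only the term
  \<open>\<langle>\<eta>\<^sub>u v, w\<rangle>\<close> survives. Hence \<open>\<eta>\<^sub>u\<close> is isotropic on one summand, which for a diagonal
  endomorphism forces \<open>\<eta>\<^sub>u = 0\<close>. Since every u
  is a sum of vectors from the two summands, \<open>\<eta> = 0\<close>.\<close>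

lemma diag_soE:
  assumes "A \<in> diag_so"
  obtains a where "A = (\<lambda>p. (a *v fst p, a *v snd p))"
  using assms unfolding diag_so_def by blast

lemma zero_in_diag_so: "(\<lambda>p. 0) \<in> diag_so"
  unfolding diag_so_def
  by (rule CollectI, rule exI[of _ 0]) (auto simp: zero_prod_def transpose_def vec_eq_iff)

lemma scal_nn_diag_so_mixed:
  assumes "A \<in> diag_so"
  shows "scal_nn (A (x, 0)) (0, y) = 0" and "scal_nn (A (0, y)) (x, 0) = 0"
  using assms by (auto elim: diag_soE simp: scal_nn_def)

lemma diag_so_eq_zero_if_isotropic_fst:
  assumes "A \<in> diag_so" and iso: "\<And>x x'. scal_nn (A (x, 0)) (x', 0) = 0"
  shows "A = (\<lambda>p. 0)"
proof -
  obtain a where A: "A = (\<lambda>p. (a *v fst p, a *v snd p))"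
    using assms(1) by (rule diag_soE)
  have "(a *v x) \<bullet> (a *v x) = 0" for x
    using iso[of x "a *v x"] by (simp add: A scal_nn_def)
  then have "a *v x = 0" for x by simp
  then show ?thesis by (simp add: A zero_prod_def)
qed

lemma diag_so_eq_zero_if_isotropic_snd:
  assumes "A \<in> diag_so" and iso: "\<And>y y'. scal_nn (A (0, y)) (0, y') = 0"
  shows "A = (\<lambda>p. 0)"
proof -
  obtain a where A: "A = (\<lambda>p. (a *v fst p, a *v snd p))"
    using assms(1) by (rule diag_soE)
  have "(a *v y) \<bullet> (a *v y) = 0" for y
    using iso[of y "a *v y"] by (simp add: A scal_nn_def)
  then have "a *v y = 0" for y by simp
  then show ?thesis by (simp add: A zero_prod_def)
qed

lemma zero_in_gen_prolong1:
  assumes "(\<lambda>v. 0) \<in> h" and "\<And>w. B 0 w = 0"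
  shows "(\<lambda>u v. 0) \<in> gen_prolong1 B h"
  using assms unfolding gen_prolong1_def by simp

lemma gen_prolong1_diag_so_vanishes:
  assumes "\<eta> \<in> gen_prolong1 scal_nn diag_so"
  shows "\<eta> u = (\<lambda>p. 0)"
proof -
  have add: "\<And>u u'. \<eta> (u + u') = (\<lambda>p. \<eta> u p + \<eta> u' p)"
    and diag: "\<And>u. \<eta> u \<in> diag_so"
    and cyc: "\<And>u v w. scal_nn (\<eta> u v) w + scal_nn (\<eta> w u) v + scal_nn (\<eta> v w) u = 0"
    using assms unfolding gen_prolong1_def by auto
  have fst_part: "\<eta> (x, 0) = (\<lambda>p. 0)" for x
  proof (rule diag_so_eq_zero_if_isotropic_snd[OF diag])
    fix y y'
    show "scal_nn (\<eta> (x, 0) (0, y)) (0, y') = 0"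
      using cyc[of "(x, 0)" "(0, y)" "(0, y')"] by (simp add: scal_nn_diag_so_mixed[OF diag])
  qed
  have snd_part: "\<eta> (0, y) = (\<lambda>p. 0)" for y
  proof (rule diag_so_eq_zero_if_isotropic_fst[OF diag])
    fix x x'
    show "scal_nn (\<eta> (0, y) (x, 0)) (x', 0) = 0"
      using cyc[of "(0, y)" "(x, 0)" "(x', 0)"] by (simp add: scal_nn_diag_so_mixed[OF diag])
  qed
  obtain x y where "u = (x, 0) + (0, y)"
    by (metis add_Pair add.right_neutral add_0 prod.collapse)
  then have "\<eta> u = (\<lambda>p. \<eta> (x, 0) p + \<eta> (0, y) p)"
    by (simp only: add)
  then show ?thesis by (simp add: fst_part snd_part)
qed

theorem lemma2p19:
  shows "gen_prolong1 scal_nn (diag_so :: (((real^'n) \<times> (real^'n)) \<Rightarrow> ((real^'n) \<times> (real^'n))) set)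
           = {\<lambda>u v. 0}"
proof (intro set_eqI iffI)
  fix \<eta> :: "(real^'n) \<times> (real^'n) \<Rightarrow> (real^'n) \<times> (real^'n) \<Rightarrow> (real^'n) \<times> (real^'n)"
  assume "\<eta> \<in> gen_prolong1 scal_nn diag_so"
  then show "\<eta> \<in> {\<lambda>u v. 0}"
    by (simp add: fun_eq_iff gen_prolong1_diag_so_vanishes)
next
  fix \<eta> :: "(real^'n) \<times> (real^'n) \<Rightarrow> (real^'n) \<times> (real^'n) \<Rightarrow> (real^'n) \<times> (real^'n)"
  assume "\<eta> \<in> {\<lambda>u v. 0}"
  moreover have "(\<lambda>u v. 0) \<in> gen_prolong1 scal_nn diag_so"
    by (rule zero_in_gen_prolong1[OF zero_in_diag_so]) (simp add: scal_nn_def)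
  ultimately show "\<eta> \<in> gen_prolong1 scal_nn diag_so"
    by simp
qed

end
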